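(* Let $K$ be a real biquadratic field with quadratic subfields $k_1=\mathbb{Q}(\sqrt{d_1})$, $k_2=\mathbb{Q}(\sqrt{d_2})$, $k_3=\mathbb{Q}(\sqrt{d_1d_2})$, whose fundamental units $\epsilon_1,\epsilon_2,\epsilon_3$ each have norm $+1$. For $i=1,2,3$ let $m_i$ be the squarefree part of the positive integer $\mathrm{Norm}_{k_i/\mathbb{Q}}(\epsilon_i+1)$. Let $E_K$ be the unit group of $K$. Then for integers $n_1,n_2,n_3$, the unit $\epsilon_1^{n_1}\epsilon_2^{n_2}\epsilon_3^{n_3}$ is a square in $E_K$ if and only if $m_1^{n_1}m_2^{n_2}m_3^{n_3}$ equals one of $1,d_1,d_2,d_1d_2$ up to the square of a rational number.
   Context: Here $d_1,d_2$ are integers such that the three fields listed are the distinct real quadratic subfields of $K$. *)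

theory Defs
  imports "HOL-Analysis.Analysis" "HOL-Computational_Algebra.Computational_Algebra"
begin

definition qfield :: "int \<Rightarrow> real set" where
  "qfield d = {of_rat a + of_rat b * sqrt (of_int d) | a b. True}"

definition biquad_field :: "int \<Rightarrow> int \<Rightarrow> real set" where
  "biquad_field d1 d2 = {of_rat a + of_rat b * sqrt (of_int d1) + of_rat c * sqrt (of_int d2)
       + of_rat e * sqrt (of_int d1) * sqrt (of_int d2) | a b c e. True}"

definition unit_group :: "real set \<Rightarrow> real set" where
  "unit_group F = {x \<in> F. x \<noteq> 0 \<and> algebraic_int x \<and> algebraic_int (1 / x)}"

definition qnorm :: "int \<Rightarrow> real \<Rightarrow> rat" where
  "qnorm d x = (THE N. \<exists>a b. x = of_rat a + of_rat b * sqrt (of_int d)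
                        \<and> N = a ^ 2 - of_int d * b ^ 2)"

definition fundamental_unit :: "int \<Rightarrow> real \<Rightarrow> bool" where
  "fundamental_unit d \<epsilon> \<longleftrightarrow> \<epsilon> \<in> unit_group (qfield d) \<and> \<epsilon> > 1 \<and>
     (\<forall>u \<in> unit_group (qfield d). \<exists>n::int. u = \<epsilon> powi n \<or> u = - (\<epsilon> powi n))"

definition nonsquare :: "int \<Rightarrow> bool" where
  "nonsquare d \<longleftrightarrow> (\<nexists>s::int. d = s ^ 2)"

end

theory Submission
  imports Defs "Jordan_Normal_Form.Char_Poly"
begin

(*
  For such a unit \<epsilon> = a + b\<surd>d the trace \<epsilon> + 1/\<epsilon> = 2a is a rational algebraic integer t,
  N(\<epsilon> + 1) = t + 2 and (\<epsilon> + 1)^2 = \<epsilon> N(\<epsilon> + 1). Writing N(\<epsilon> + 1) = m k^2 with m squarefree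
  gives \<epsilon> m = ((\<epsilon> + 1) / k)^2. Hence P = \<epsilon>1^n1 \<epsilon>2^n2 \<epsilon>3^n3 times M = m1^n1 m2^n2 m3^n3 is the
  square of an invertible element U of K, so P is the square of a unit of K iff M is a square in
  K (square roots of units are units, the unit witness being U w / M). A rational number is a
  square in K iff it is 1, d1, d2 or d1 d2 times a rational square, by comparing coordinates in
  the basis 1, \<surd>d1, \<surd>d2, \<surd>d1 \<surd>d2.
*)

section \<open>Algebraic integers form a ring\<close>

interpretation int_module: Modules.module "\<lambda>(k::int) (x::'a::comm_ring_1). of_int k * x"
  by unfold_locales (simp_all add: algebra_simps)

abbreviation int_span :: "'a::comm_ring_1 set \<Rightarrow> 'a set" where
  "int_span \<equiv> int_module.span"

lemma mult_mem_int_span: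
  assumes "\<And>a. a \<in> A \<Longrightarrow> y * a \<in> int_span B" and "x \<in> int_span A"
  shows "y * x \<in> int_span B"
  using assms(2)
proof (induction rule: int_module.span_induct_alt)
  case (step k a x)
  have "y * (of_int k * a + x) = of_int k * (y * a) + y * x"
    by (simp add: distrib_left mult.left_commute)
  then show ?case
    using int_module.span_add[OF int_module.span_scale[OF assms(1)[OF step(1)]] step(2)]
    by simp
qed (simp add: int_module.span_zero)

lemma mult_mem_int_span_times:
  assumes "x \<in> int_span A" and "y \<in> int_span B"
  shows "x * y \<in> int_span ((\<lambda>(a, b). a * b) ` (A \<times> B))"
proof -
  have "a * y \<in> int_span ((\<lambda>(a, b). a * b) ` (A \<times> B))" if "a \<in> A" for a
    using that by (intro mult_mem_int_span[OF _ assms(2)] int_module.span_base) force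
  then have "y * x \<in> int_span ((\<lambda>(a, b). a * b) ` (A \<times> B))"
    by (intro mult_mem_int_span[OF _ assms(1)]) (simp add: mult.commute)
  then show ?thesis
    by (simp only: mult.commute)
qed

text \<open>Determinant trick: \<open>x\<close> is an eigenvalue of the integer matrix of multiplication by \<open>x\<close>
  on \<open>A\<close>, hence a root of its monic characteristic polynomial.\<close>
lemma algebraic_int_if_int_span_stable:
  fixes x :: "'a::field_char_0"
  assumes fin: "finite A" and one: "1 \<in> A" and stable: "\<And>a. a \<in> A \<Longrightarrow> x * a \<in> int_span A"
  shows "algebraic_int x"
proof -
  define n where "n = card A"
  obtain h where h: "bij_betw h {0..<n} A"
    using ex_bij_betw_nat_finite[OF fin] unfolding n_def by blast
  have "\<forall>a\<in>A. \<exists>c. x * a = (\<Sum>b\<in>A. of_int (c b) * b)"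
    using stable int_module.span_finite[OF fin] by blast
  then obtain c where c: "\<And>a. a \<in> A \<Longrightarrow> x * a = (\<Sum>b\<in>A. of_int (c a b) * b)"
    by metis
  define C :: "int mat" where "C = mat n n (\<lambda>(i, j). c (h i) (h j))"
  define v :: "'a vec" where "v = vec n h"
  have C: "C \<in> carrier_mat n n" and C': "map_mat of_int C \<in> carrier_mat n n"
    by (simp_all add: C_def)
  have h_mem: "h i \<in> A" if "i < n" for i
    using h that by (auto simp: bij_betw_def)
  have "map_mat of_int C *\<^sub>v v = x \<cdot>\<^sub>v v"
  proof (rule eq_vecI)
    fix i assume "i < dim_vec (x \<cdot>\<^sub>v v)"
    then have i: "i < n" by (simp add: v_def)
    have "(map_mat of_int C *\<^sub>v v) $ i = (\<Sum>j<n. of_int (c (h i) (h j)) * h j)"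
      using i by (simp add: C_def v_def scalar_prod_def row_def atLeast0LessThan)
    also have "\<dots> = (\<Sum>b\<in>A. of_int (c (h i) b) * b)"
      using sum.reindex_bij_betw[OF h, of "\<lambda>b. of_int (c (h i) b) * b"]
      by (simp add: atLeast0LessThan)
    also have "\<dots> = (x \<cdot>\<^sub>v v) $ i"
      using c[OF h_mem[OF i]] i by (simp add: v_def)
    finally show "(map_mat of_int C *\<^sub>v v) $ i = (x \<cdot>\<^sub>v v) $ i" .
  qed (simp add: v_def C_def)
  moreover have "v \<noteq> 0\<^sub>v n"
  proof -
    obtain i where "i < n" "h i = 1"
      using h one by (auto simp: bij_betw_def)
    then show ?thesis by (auto simp: v_def dest!: arg_cong[of _ _ "\<lambda>v. vec_index v i"])
  qed
  ultimately have "eigenvalue (map_mat of_int C) x"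
    unfolding eigenvalue_def eigenvector_def using C' by (intro exI[of _ v]) (simp add: v_def)
  then have "poly (map_poly of_int (char_poly C)) x = 0"
    using eigenvalue_root_char_poly[OF C'] of_int_hom.char_poly_hom[OF C] by metis
  moreover have "lead_coeff (char_poly C) = 1"
    using degree_monic_char_poly[OF C] by simp
  ultimately show ?thesis
    unfolding algebraic_int_altdef_ipoly by blast
qed

lemma algebraic_int_imp_int_span_stable:
  fixes x :: "'a::field_char_0"
  assumes "algebraic_int x"
  obtains A where "finite A" "1 \<in> A" "\<And>a. a \<in> A \<Longrightarrow> x * a \<in> int_span A"
proof -
  obtain p where p: "poly (map_poly of_int p) x = 0" "lead_coeff p = 1"
    using assms unfolding algebraic_int_altdef_ipoly by blast
  define k where "k = degree p"
  define A where "A = (\<lambda>i. x ^ i) ` {..<k}"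
  have "k > 0"
  proof (rule ccontr)
    assume "\<not> k > 0"
    then have "p = [:1:]"
      using p(2) by (metis degree_0_id k_def neq0_conv)
    then show False
      using p(1) by simp
  qed
  have "0 = (\<Sum>i\<le>k. of_int (coeff p i) * x ^ i)"
    using p(1) by (simp add: poly_altdef coeff_map_poly k_def)
  also have "\<dots> = (\<Sum>i<k. of_int (coeff p i) * x ^ i) + x ^ k"
    using p(2) by (simp add: lessThan_Suc_atMost[symmetric] k_def)
  finally have xk: "x ^ k = (\<Sum>i<k. of_int (- coeff p i) * x ^ i)"
    by (simp add: sum_negf eq_neg_iff_add_eq_0 add.commute)
  have "x ^ k \<in> int_span A"
    unfolding xk
    by (intro int_module.span_sum int_module.span_scale int_module.span_base) (simp add: A_def)
  moreover have "x ^ Suc i \<in> int_span A" if "Suc i < k" for i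
    using that unfolding A_def by (intro int_module.span_base image_eqI[of _ _ "Suc i"]) auto
  ultimately have "x * a \<in> int_span A" if "a \<in> A" for a
    using that by (auto simp: A_def simp flip: power_Suc) (metis Suc_lessI)
  moreover have "1 \<in> A"
    using \<open>k > 0\<close> by (auto simp: A_def intro: image_eqI[of _ _ 0])
  ultimately show ?thesis
    using that[of A] by (simp add: A_def)
qed

lemma algebraic_int_imp_common_int_span_stable:
  fixes x y :: "'a::field_char_0"
  assumes "algebraic_int x" "algebraic_int y"
  obtains C where "finite C" "1 \<in> C"
    "\<And>c. c \<in> C \<Longrightarrow> x * c \<in> int_span C" "\<And>c. c \<in> C \<Longrightarrow> y * c \<in> int_span C"
proof -
  obtain A where A: "finite A" "1 \<in> A" "\<And>a. a \<in> A \<Longrightarrow> x * a \<in> int_span A"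
    using algebraic_int_imp_int_span_stable[OF assms(1)] by blast
  obtain B where B: "finite B" "1 \<in> B" "\<And>b. b \<in> B \<Longrightarrow> y * b \<in> int_span B"
    using algebraic_int_imp_int_span_stable[OF assms(2)] by blast
  define C where "C = (\<lambda>(a, b). a * b) ` (A \<times> B)"
  have "finite C" "1 \<in> C"
    using A B by (force simp: C_def)+
  moreover have "x * c \<in> int_span C" "y * c \<in> int_span C" if "c \<in> C" for c
  proof -
    obtain a b where ab: "a \<in> A" "b \<in> B" "c = a * b"
      using \<open>c \<in> C\<close> by (auto simp: C_def)
    show "x * c \<in> int_span C"
      using mult_mem_int_span_times[OF A(3)[OF ab(1)] int_module.span_base[OF ab(2)]]
      by (simp add: ab C_def mult.assoc)
    show "y * c \<in> int_span C"
      using mult_mem_int_span_times[OF int_module.span_base[OF ab(1)] B(3)[OF ab(2)]]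
      by (simp add: ab C_def mult.left_commute)
  qed
  ultimately show ?thesis
    using that by blast
qed

lemma algebraic_int_plus:
  fixes x y :: "'a::field_char_0"
  assumes "algebraic_int x" "algebraic_int y"
  shows "algebraic_int (x + y)"
proof -
  obtain C where C: "finite C" "1 \<in> C"
    "\<And>c. c \<in> C \<Longrightarrow> x * c \<in> int_span C" "\<And>c. c \<in> C \<Longrightarrow> y * c \<in> int_span C"
    using algebraic_int_imp_common_int_span_stable[OF assms] by blast
  show ?thesis
    using C by (intro algebraic_int_if_int_span_stable) (auto simp: distrib_right intro: int_module.span_add)
qed

lemma algebraic_int_times:
  fixes x y :: "'a::field_char_0"
  assumes "algebraic_int x" "algebraic_int y"
  shows "algebraic_int (x * y)"
proof -
  obtain C where C: "finite C" "1 \<in> C"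
    "\<And>c. c \<in> C \<Longrightarrow> x * c \<in> int_span C" "\<And>c. c \<in> C \<Longrightarrow> y * c \<in> int_span C"
    using algebraic_int_imp_common_int_span_stable[OF assms] by blast
  show ?thesis
    using C mult_mem_int_span[of C x C]
    by (intro algebraic_int_if_int_span_stable) (auto simp: mult.assoc)
qed

lemma algebraic_int_power:
  fixes x :: "'a::field_char_0"
  shows "algebraic_int x \<Longrightarrow> algebraic_int (x ^ n)"
  by (induction n) (auto intro: algebraic_int_times)

lemma algebraic_int_power_int:
  fixes x :: "'a::field_char_0"
  assumes "algebraic_int x" "algebraic_int (inverse x)"
  shows "algebraic_int (x powi n)"
  using assms by (simp add: power_int_def algebraic_int_power)

lemma algebraic_int_power_imp_algebraic_int:
  fixes x :: "'a::field_char_0"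
  assumes "algebraic_int (x ^ n)" "n > 0"
  shows "algebraic_int x"
  by (rule algebraic_int_root[OF assms(1), of "monom 1 n"])
     (use assms(2) in \<open>auto simp: poly_monom coeff_monom degree_monom_eq\<close>)

lemma of_rat_power_int: "of_rat (q powi n) = (of_rat q :: 'a::field_char_0) powi n"
  by (simp add: power_int_def of_rat_power of_rat_inverse)

section \<open>Real quadratic fields\<close>

lemma sqrt_nonsquare_notin_Rats:
  assumes "nonsquare d" "d \<ge> 0"
  shows "sqrt (of_int d) \<notin> \<rat>"
proof
  assume "sqrt (of_int d) \<in> \<rat>"
  moreover have "algebraic_int (sqrt (of_int d))"
    by (intro algebraic_int_sqrt) simp
  ultimately obtain s where "sqrt (of_int d) = of_int s"
    using rational_algebraic_int_is_int by (blast elim: Ints_cases)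
  then have "d = s ^ 2"
    using assms(2) by (metis of_int_0_le_iff of_int_eq_iff of_int_power real_sqrt_pow2)
  then show False
    using assms(1) by (auto simp: nonsquare_def)
qed

lemma of_int_nonsquare_neq_square:
  assumes "nonsquare d" "d \<ge> 0"
  shows "(of_int d :: rat) \<noteq> q ^ 2"
proof
  assume "of_int d = q ^ 2"
  then have "sqrt (of_int d) = sqrt ((of_rat q) ^ 2)"
    by (metis of_rat_of_int_eq of_rat_power)
  also have "\<dots> = of_rat \<bar>q\<bar>"
    by simp
  finally have "sqrt (of_int d) \<in> \<rat>"
    by simp
  then show False
    using sqrt_nonsquare_notin_Rats[OF assms] by blast
qed

lemma qfield_coords_unique:
  assumes "nonsquare d" "d \<ge> 0"
    and "of_rat a + of_rat b * sqrt (of_int d) = of_rat a' + of_rat b' * sqrt (of_int d)"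
  shows "a = a' \<and> b = b'"
proof (cases "b = b'")
  case False
  with assms(3) have "sqrt (of_int d) = of_rat ((a' - a) / (b - b'))"
    by (simp add: of_rat_divide of_rat_diff field_simps)
  then show ?thesis
    using sqrt_nonsquare_notin_Rats[OF assms(1,2)] by (metis Rats_of_rat)
qed (use assms(3) in simp)

lemma qnorm_eq:
  assumes "nonsquare d" "d \<ge> 0"
  shows "qnorm d (of_rat a + of_rat b * sqrt (of_int d)) = a ^ 2 - of_int d * b ^ 2"
  unfolding qnorm_def
  by (rule the_equality) (use qfield_coords_unique[OF assms] in blast)+

lemma of_rat_mult_mem_qfield:
  assumes "x \<in> qfield d"
  shows "of_rat q * x \<in> qfield d"
proof -
  obtain a b where "x = of_rat a + of_rat b * sqrt (of_int d)"
    using assms by (auto simp: qfield_def)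
  then show ?thesis
    unfolding qfield_def
    by (intro CollectI exI[of _ "q * a"] exI[of _ "q * b"]) (simp add: of_rat_mult algebra_simps)
qed

lemma of_rat_add_mem_qfield:
  assumes "x \<in> qfield d"
  shows "of_rat q + x \<in> qfield d"
proof -
  obtain a b where "x = of_rat a + of_rat b * sqrt (of_int d)"
    using assms by (auto simp: qfield_def)
  then show ?thesis
    unfolding qfield_def
    by (intro CollectI exI[of _ "q + a"] exI[of _ b]) (simp add: of_rat_add)
qed

lemma norm_one_unit_plus_one:
  assumes nonsq: "nonsquare d" and d_pos: "d > 0" and unit: "\<epsilon> \<in> unit_group (qfield d)"
    and pos: "\<epsilon> > 0" and norm: "qnorm d \<epsilon> = 1"
  obtains N :: int where "N > 0" "qnorm d (\<epsilon> + 1) = of_int N"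
    "(\<epsilon> + 1) ^ 2 = \<epsilon> * of_int N" "1 / (\<epsilon> + 1) \<in> qfield d"
proof -
  let ?r = "sqrt (of_int d) :: real"
  obtain a b where \<epsilon>: "\<epsilon> = of_rat a + of_rat b * ?r"
    using unit by (auto simp: unit_group_def qfield_def)
  have "a ^ 2 - of_int d * b ^ 2 = 1"
    using norm qnorm_eq[OF nonsq, of a b] d_pos \<epsilon> by simp
  then have "(of_rat a) ^ 2 - of_int d * (of_rat b) ^ 2 = (1 :: real)"
    by (metis of_rat_1 of_rat_diff of_rat_mult of_rat_of_int_eq of_rat_power)
  then have "\<epsilon> * (of_rat a - of_rat b * ?r) = 1"
    using d_pos unfolding \<epsilon> by (simp add: algebra_simps power2_eq_square)
  then have "1 / \<epsilon> = of_rat a - of_rat b * ?r"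
    by (metis mult.commute nonzero_eq_divide_eq mult_zero_left zero_neq_one)
  then have "\<epsilon> + 1 / \<epsilon> = of_rat (2 * a)"
    using \<epsilon> by (simp add: of_rat_mult)
  moreover have "algebraic_int (\<epsilon> + 1 / \<epsilon>)"
    using unit by (intro algebraic_int_plus) (auto simp: unit_group_def)
  ultimately obtain t where t: "\<epsilon> + 1 / \<epsilon> = of_int t"
    using rational_algebraic_int_is_int by (metis Ints_cases Rats_of_rat)
  have "2 * a = of_int t"
    using t \<open>\<epsilon> + 1 / \<epsilon> = of_rat (2 * a)\<close> by (metis of_rat_eq_iff of_rat_of_int_eq)
  define N where "N = t + 2"
  have "qnorm d (\<epsilon> + 1) = (a + 1) ^ 2 - of_int d * b ^ 2"
    using qnorm_eq[OF nonsq, of "a + 1" b] d_pos \<epsilon> by (simp add: of_rat_add add_ac)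
  also have "\<dots> = (a ^ 2 - of_int d * b ^ 2) + 2 * a + 1"
    by (simp add: power2_eq_square algebra_simps)
  also have "\<dots> = of_int N"
    using \<open>a ^ 2 - of_int d * b ^ 2 = 1\<close> \<open>2 * a = of_int t\<close> by (simp add: N_def)
  finally have "qnorm d (\<epsilon> + 1) = of_int N" .
  moreover have N_pos: "N > 0"
  proof -
    have "\<epsilon> + 1 / \<epsilon> > 0"
      using pos by (intro add_pos_pos) auto
    then show ?thesis
      using t by (simp add: N_def)
  qed
  moreover have "(\<epsilon> + 1) ^ 2 = \<epsilon> * (\<epsilon> + 1 / \<epsilon> + 2)"
    using pos by (simp add: field_simps power2_eq_square)
  then have "(\<epsilon> + 1) ^ 2 = \<epsilon> * of_int N"
    using t by (simp add: N_def)
  moreover have "(\<epsilon> + 1) * (1 / \<epsilon> + 1) = of_int N"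
    using pos t by (simp add: N_def field_simps)
  then have "1 / (\<epsilon> + 1) = of_rat (1 / of_int N) * (1 / \<epsilon> + 1)"
    using pos N_pos by (simp add: of_rat_divide field_simps)
  moreover have "1 / \<epsilon> + 1 \<in> qfield d"
    using \<open>1 / \<epsilon> = of_rat a - of_rat b * ?r\<close> unfolding qfield_def
    by (intro CollectI exI[of _ "a + 1"] exI[of _ "- b"]) (simp add: of_rat_add of_rat_minus)
  ultimately show ?thesis
    using that of_rat_mult_mem_qfield by metis
qed

lemma norm_one_unit_times_squarefree_part:
  assumes "nonsquare d" "d > 0" and unit: "\<epsilon> \<in> unit_group (qfield d)"
    and pos: "\<epsilon> > 0" and "qnorm d \<epsilon> = 1"
  obtains u where "u \<in> qfield d" "1 / u \<in> qfield d" "u \<noteq> 0"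
    "\<epsilon> * of_int (squarefree_part \<lfloor>qnorm d (\<epsilon> + 1)\<rfloor>) = u ^ 2"
proof -
  obtain N :: int where N: "N > 0" "qnorm d (\<epsilon> + 1) = of_int N"
    "(\<epsilon> + 1) ^ 2 = \<epsilon> * of_int N" "1 / (\<epsilon> + 1) \<in> qfield d"
    using norm_one_unit_plus_one[OF assms] .
  define m where "m = squarefree_part N"
  define k where "k = square_part N"
  have N_eq: "N = m * k ^ 2"
    unfolding m_def k_def by (rule squarefree_decompose)
  then have "k \<noteq> 0"
    using N(1) by auto
  define u where "u = of_rat (1 / of_int k) * (\<epsilon> + 1)"
  have "\<epsilon> + 1 \<in> qfield d"
    using unit of_rat_add_mem_qfield[of \<epsilon> d 1] by (simp add: unit_group_def add.commute)
  then have "u \<in> qfield d"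
    by (simp add: u_def of_rat_mult_mem_qfield)
  moreover have "1 / u = of_rat (of_int k) * (1 / (\<epsilon> + 1))"
    using \<open>k \<noteq> 0\<close> by (simp add: u_def of_rat_divide)
  then have "1 / u \<in> qfield d"
    using of_rat_mult_mem_qfield[OF N(4)] by metis
  moreover have "u \<noteq> 0"
    using pos \<open>k \<noteq> 0\<close> by (simp add: u_def)
  moreover have "u ^ 2 = \<epsilon> * of_int m"
    using N(3) \<open>k \<noteq> 0\<close> by (simp add: u_def N_eq of_rat_divide power_divide field_simps)
  ultimately show ?thesis
    using that N(2) by (simp add: m_def)
qed

section \<open>The biquadratic field\<close>

lemma square_cross_terms_eq_0_cases:
  fixes a b c e D1 D2 :: "'a::field"
  assumes "D1 \<noteq> 0" "D2 \<noteq> 0" "\<And>q. D1 * D2 \<noteq> q ^ 2"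
    and "a * b + D2 * c * e = 0" "a * c + D1 * b * e = 0" "a * e + b * c = 0"
  shows "(b = 0 \<and> c = 0 \<and> e = 0) \<or> (a = 0 \<and> c = 0 \<and> e = 0) \<or>
    (a = 0 \<and> b = 0 \<and> e = 0) \<or> (a = 0 \<and> b = 0 \<and> c = 0)"
proof (cases "a = 0")
  case False
  have "a * b = - D2 * c * e"
    using assms(4) by (simp add: eq_neg_iff_add_eq_0)
  then have "a * (a * b) = - D2 * e * (a * c)"
    by (simp add: algebra_simps)
  also have "a * c = - D1 * b * e"
    using assms(5) by (simp add: eq_neg_iff_add_eq_0)
  finally have "b * (a ^ 2 - D1 * D2 * e ^ 2) = 0"
    by (simp add: power2_eq_square algebra_simps)
  moreover have "a ^ 2 - D1 * D2 * e ^ 2 \<noteq> 0"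
  proof
    assume "a ^ 2 - D1 * D2 * e ^ 2 = 0"
    with False have "e \<noteq> 0" and "D1 * D2 = (a / e) ^ 2"
      by (auto simp: field_simps)
    then show False
      using assms(3) by blast
  qed
  ultimately show ?thesis
    using False assms(5,6) by auto
qed (use assms in \<open>auto simp: mult.assoc\<close>)

locale real_biquadratic =
  fixes d1 d2 :: int
  assumes d1_pos: "d1 > 0" and d2_pos: "d2 > 0"
    and nonsquare_d1: "nonsquare d1" and nonsquare_d2: "nonsquare d2"
    and nonsquare_d1_d2: "nonsquare (d1 * d2)"
begin

abbreviation r1 :: real where "r1 \<equiv> sqrt (of_int d1)"
abbreviation r2 :: real where "r2 \<equiv> sqrt (of_int d2)"
abbreviation K :: "real set" where "K \<equiv> biquad_field d1 d2"

definition bq_elem :: "rat \<Rightarrow> rat \<Rightarrow> rat \<Rightarrow> rat \<Rightarrow> real" where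
  "bq_elem a b c e = of_rat a + of_rat b * r1 + of_rat c * r2 + of_rat e * r1 * r2"

lemma mem_biquad_field_iff: "x \<in> K \<longleftrightarrow> (\<exists>a b c e. x = bq_elem a b c e)"
  by (simp add: biquad_field_def bq_elem_def)

lemma bq_elem_mem_biquad_field: "bq_elem a b c e \<in> K"
  by (auto simp: mem_biquad_field_iff)

lemma bq_elem_mult:
  defines "D1 \<equiv> of_int d1" and "D2 \<equiv> of_int d2"
  shows "bq_elem a b c e * bq_elem a' b' c' e' =
    bq_elem (a * a' + b * b' * D1 + c * c' * D2 + e * e' * D1 * D2)
      (a * b' + b * a' + (c * e' + e * c') * D2) (a * c' + c * a' + (b * e' + e * b') * D1)
      (a * e' + e * a' + b * c' + c * b')"
proof -
  have "r1 * r1 = of_rat D1" "r2 * r2 = of_rat D2"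
    using d1_pos d2_pos by (simp_all add: D1_def D2_def)
  then show ?thesis
    unfolding bq_elem_def of_rat_add of_rat_mult
    by (simp add: algebra_simps) (simp flip: mult.assoc)
qed


lemma mult_mem_biquad_field:
  assumes "x \<in> K" "y \<in> K"
  shows "x * y \<in> K"
proof -
  obtain a b c e a' b' c' e' where "x = bq_elem a b c e" "y = bq_elem a' b' c' e'"
    using assms by (auto simp: mem_biquad_field_iff)
  then show ?thesis
    by (simp add: bq_elem_mult bq_elem_mem_biquad_field)
qed

lemma of_rat_mem_biquad_field: "of_rat q \<in> K"
  using bq_elem_mem_biquad_field[of q 0 0 0] by (simp add: bq_elem_def)

lemma sqrt_mem_biquad_field: "r1 \<in> K" "r2 \<in> K" "r1 * r2 \<in> K"
  using bq_elem_mem_biquad_field[of 0 1 0 0] bq_elem_mem_biquad_field[of 0 0 1 0]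
    bq_elem_mem_biquad_field[of 0 0 0 1]
  by (simp_all add: bq_elem_def)

lemma qfield_subset_biquad_field:
  "qfield d1 \<subseteq> K" "qfield d2 \<subseteq> K" "qfield (d1 * d2) \<subseteq> K"
  using bq_elem_mem_biquad_field[of _ _ 0 0] bq_elem_mem_biquad_field[of _ 0 _ 0]
    bq_elem_mem_biquad_field[of _ 0 0 _]
  by (auto simp: qfield_def bq_elem_def real_sqrt_mult mult.assoc)

lemma power_int_mem_biquad_field:
  assumes "x \<in> K" "1 / x \<in> K"
  shows "x powi n \<in> K"
proof -
  have "y ^ k \<in> K" if "y \<in> K" for y k
    using that of_rat_mem_biquad_field[of 1]
    by (induction k) (auto intro: mult_mem_biquad_field)
  then show ?thesis
    using assms by (simp add: power_int_def inverse_eq_divide)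
qed

lemma r2_notin_qfield_d1: "r2 \<noteq> of_rat x + of_rat y * r1"
proof
  assume "r2 = of_rat x + of_rat y * r1"
  then have "r2 * r2 = of_rat x * of_rat x + of_rat y * of_rat y * (r1 * r1) + 2 * of_rat x * of_rat y * r1"
    by (simp add: algebra_simps)
  then have "of_rat (of_int d2) + of_rat 0 * r1 = of_rat (x ^ 2 + of_int d1 * y ^ 2) + of_rat (2 * x * y) * r1"
    using d1_pos d2_pos by (simp add: of_rat_add of_rat_mult power2_eq_square)
  then have "of_int d2 = x ^ 2 + of_int d1 * y ^ 2" "2 * x * y = 0"
    using qfield_coords_unique[OF nonsquare_d1] d1_pos by (metis less_imp_le)+
  then have "of_int d2 = x ^ 2 \<or> of_int (d1 * d2) = (of_int d1 * y) ^ 2"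
    by (auto simp: power2_eq_square)
  then show False
    using of_int_nonsquare_neq_square nonsquare_d2 nonsquare_d1_d2 d1_pos d2_pos
    by (metis less_imp_le zero_less_mult_iff)
qed


lemma of_rat_add_mult_r1_eq_0_iff: "of_rat a + of_rat b * r1 = 0 \<longleftrightarrow> a = 0 \<and> b = 0"
  using qfield_coords_unique[OF nonsquare_d1, of a b 0 0] d1_pos by auto

lemma bq_elem_eq_0:
  assumes "bq_elem a b c e = 0"
  shows "a = 0 \<and> b = 0 \<and> c = 0 \<and> e = 0"
proof -
  have "c = 0 \<and> e = 0"
  proof (rule ccontr)
    assume ce: "\<not> (c = 0 \<and> e = 0)"
    define D where "D = c ^ 2 - of_int d1 * e ^ 2"
    have "(of_rat c + of_rat e * r1) * (of_rat c + of_rat (- e) * r1) = of_rat c ^ 2 - of_rat e ^ 2 * r1 ^ 2"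
      by (simp add: of_rat_minus power2_eq_square algebra_simps)
    then have conj: "(of_rat c + of_rat e * r1) * (of_rat c + of_rat (- e) * r1) = of_rat D"
      using d1_pos by (simp add: D_def of_rat_diff of_rat_mult of_rat_power)
    then have "D \<noteq> 0"
      using ce of_rat_add_mult_r1_eq_0_iff[of c e] of_rat_add_mult_r1_eq_0_iff[of c "- e"] by auto
    have "(of_rat a + of_rat b * r1) = - r2 * (of_rat c + of_rat e * r1)"
      using assms by (simp add: bq_elem_def algebra_simps eq_neg_iff_add_eq_0)
    then have "r2 * of_rat D = - (of_rat a + of_rat b * r1) * (of_rat c + of_rat (- e) * r1)"
      by (simp flip: conj)
    also have "\<dots> = of_rat (- (a * c - b * e * of_int d1)) + of_rat (- (b * c - a * e)) * r1"
      using d1_pos by (simp add: of_rat_diff of_rat_mult of_rat_minus algebra_simps)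
    finally have "r2 = of_rat (- (a * c - b * e * of_int d1) / D) + of_rat (- (b * c - a * e) / D) * r1"
      using \<open>D \<noteq> 0\<close> by (simp add: of_rat_divide field_simps)
    then show False
      using r2_notin_qfield_d1 by blast
  qed
  with assms show ?thesis
    using of_rat_add_mult_r1_eq_0_iff[of a b] by (simp add: bq_elem_def)
qed


lemma rat_square_in_biquad_field_cases:
  assumes "w \<in> K" "w ^ 2 = of_rat M"
  shows "\<exists>q. M = q ^ 2 \<or> M = of_int d1 * q ^ 2 \<or> M = of_int d2 * q ^ 2 \<or> M = of_int (d1 * d2) * q ^ 2"
proof -
  obtain a b c e where w: "w = bq_elem a b c e"
    using assms(1) by (auto simp: mem_biquad_field_iff)
  define D1 :: rat where "D1 = of_int d1"
  define D2 :: rat where "D2 = of_int d2"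
  have square: "bq_elem (a * a + b * b * D1 + c * c * D2 + e * e * D1 * D2 - M)
      (2 * (a * b + D2 * c * e)) (2 * (a * c + D1 * b * e)) (2 * (a * e + b * c)) = w ^ 2 - of_rat M"
    unfolding w power2_eq_square bq_elem_mult by (simp add: bq_elem_def D1_def D2_def of_rat_diff algebra_simps)
  have "bq_elem (a * a + b * b * D1 + c * c * D2 + e * e * D1 * D2 - M)
      (2 * (a * b + D2 * c * e)) (2 * (a * c + D1 * b * e)) (2 * (a * e + b * c)) = 0"
    unfolding square using assms(2) by simp
  from bq_elem_eq_0[OF this] have M: "M = a * a + b * b * D1 + c * c * D2 + e * e * D1 * D2"
    and "a * b + D2 * c * e = 0" "a * c + D1 * b * e = 0" "a * e + b * c = 0"
    by simp_all
  moreover have "D1 \<noteq> 0" "D2 \<noteq> 0" "\<And>q. D1 * D2 \<noteq> q ^ 2"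
    using d1_pos d2_pos of_int_nonsquare_neq_square[OF nonsquare_d1_d2]
    by (simp_all add: D1_def D2_def)
  ultimately consider "b = 0" "c = 0" "e = 0" | "a = 0" "c = 0" "e = 0"
    | "a = 0" "b = 0" "e = 0" | "a = 0" "b = 0" "c = 0"
    using square_cross_terms_eq_0_cases by blast
  then show ?thesis
    using M by cases (auto simp: D1_def D2_def power2_eq_square intro!: exI)
qed

lemma rat_square_in_biquad_field_iff:
  assumes "M \<noteq> 0"
  shows "(\<exists>w\<in>K. w ^ 2 = of_rat M) \<longleftrightarrow> (\<exists>q. q \<noteq> 0 \<and>
    (M = q ^ 2 \<or> M = of_int d1 * q ^ 2 \<or> M = of_int d2 * q ^ 2 \<or> M = of_int (d1 * d2) * q ^ 2))"
proof
  assume "\<exists>w\<in>K. w ^ 2 = of_rat M"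
  then show "\<exists>q. q \<noteq> 0 \<and>
    (M = q ^ 2 \<or> M = of_int d1 * q ^ 2 \<or> M = of_int d2 * q ^ 2 \<or> M = of_int (d1 * d2) * q ^ 2)"
    using rat_square_in_biquad_field_cases assms by fastforce
next
  assume "\<exists>q. q \<noteq> 0 \<and>
    (M = q ^ 2 \<or> M = of_int d1 * q ^ 2 \<or> M = of_int d2 * q ^ 2 \<or> M = of_int (d1 * d2) * q ^ 2)"
  then obtain q where "M = q ^ 2 \<or> M = of_int d1 * q ^ 2 \<or> M = of_int d2 * q ^ 2 \<or> M = of_int (d1 * d2) * q ^ 2"
    by blast
  then obtain s where "s \<in> {1, r1, r2, r1 * r2}" "of_rat M = (of_rat q * s) ^ 2"
    using d1_pos d2_pos
    by (elim disjE; force simp: of_rat_mult of_rat_power power_mult_distrib real_sqrt_mult)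
  moreover have "of_rat q * s \<in> K" if "s \<in> {1, r1, r2, r1 * r2}"
    using that of_rat_mem_biquad_field sqrt_mem_biquad_field
    by (auto intro: mult_mem_biquad_field)
  ultimately show "\<exists>w\<in>K. w ^ 2 = of_rat M"
    by metis
qed

text \<open>\<open>1 / u \<in> K\<close> is demanded explicitly: closure of \<open>K\<close> under inverses is never proved.\<close>
definition invertible_square :: "real \<Rightarrow> bool" where
  "invertible_square x \<longleftrightarrow> (\<exists>u\<in>K. u \<noteq> 0 \<and> 1 / u \<in> K \<and> x = u ^ 2)"

lemma invertible_square_nonzero: "invertible_square x \<Longrightarrow> x \<noteq> 0"
  by (auto simp: invertible_square_def)

lemma invertible_square_mult:
  assumes "invertible_square x" "invertible_square y"
  shows "invertible_square (x * y)"
proof -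
  obtain u v where "u \<in> K" "u \<noteq> 0" "1 / u \<in> K" "x = u ^ 2" "v \<in> K" "v \<noteq> 0" "1 / v \<in> K" "y = v ^ 2"
    using assms by (auto simp: invertible_square_def)
  moreover have "1 / (u * v) = 1 / u * (1 / v)"
    by simp
  ultimately show ?thesis
    unfolding invertible_square_def
    by (metis mult_mem_biquad_field power_mult_distrib mult_eq_0_iff)
qed

lemma invertible_square_power_int:
  assumes "invertible_square x"
  shows "invertible_square (x powi n)"
proof -
  obtain u where "u \<in> K" "u \<noteq> 0" "1 / u \<in> K" "x = u ^ 2"
    using assms by (auto simp: invertible_square_def)
  moreover have "1 / u powi n = (1 / u) powi n" "(u ^ 2) powi n = (u powi n) ^ 2"
    by (simp_all add: power_int_one_over power_int_power power_int_power' mult.commute)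
  ultimately show ?thesis
    unfolding invertible_square_def
    by (metis power_int_mem_biquad_field power_int_not_zero div_by_1 divide_divide_eq_right mult_1)
qed

lemma invertible_square_of_norm_one_unit:
  assumes "qfield d \<subseteq> K" "nonsquare d" "d > 0" "\<epsilon> \<in> unit_group (qfield d)"
    "\<epsilon> > 0" "qnorm d \<epsilon> = 1"
  shows "invertible_square (\<epsilon> * of_int (squarefree_part \<lfloor>qnorm d (\<epsilon> + 1)\<rfloor>))"
proof -
  obtain u where "u \<in> qfield d" "1 / u \<in> qfield d" "u \<noteq> 0"
    "\<epsilon> * of_int (squarefree_part \<lfloor>qnorm d (\<epsilon> + 1)\<rfloor>) = u ^ 2"
    using norm_one_unit_times_squarefree_part[OF assms(2-)] .
  with assms(1) show ?thesis
    unfolding invertible_square_def by (intro bexI[of _ u]) auto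
qed

lemma square_of_unit_iff_rat_square:
  assumes P: "algebraic_int P" "algebraic_int (1 / P)"
    and PM: "invertible_square (P * of_rat M)" and "M \<noteq> 0"
  shows "(\<exists>\<eta>\<in>unit_group K. \<eta> ^ 2 = P) \<longleftrightarrow> (\<exists>w\<in>K. w ^ 2 = of_rat M)"
proof -
  obtain U where U: "U \<in> K" "U \<noteq> 0" "1 / U \<in> K" "P * of_rat M = U ^ 2"
    using PM by (auto simp: invertible_square_def)
  then have "P \<noteq> 0"
    by auto
  show ?thesis
  proof
    assume "\<exists>\<eta>\<in>unit_group K. \<eta> ^ 2 = P"
    then obtain \<eta> where "\<eta> \<in> K" "\<eta> ^ 2 = P"
      by (auto simp: unit_group_def)
    have "(\<eta> * of_rat M * (1 / U)) ^ 2 = P * of_rat M * of_rat M / U ^ 2"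
      using \<open>\<eta> ^ 2 = P\<close> by (simp add: power_mult_distrib power_divide power2_eq_square)
    also have "\<dots> = of_rat M"
      using U(2,4) by simp
    finally have "(\<eta> * of_rat M * (1 / U)) ^ 2 = of_rat M" .
    moreover have "\<eta> * of_rat M * (1 / U) \<in> K"
      using \<open>\<eta> \<in> K\<close> U(3) by (intro mult_mem_biquad_field of_rat_mem_biquad_field)
    ultimately show "\<exists>w\<in>K. w ^ 2 = of_rat M"
      by blast
  next
    assume "\<exists>w\<in>K. w ^ 2 = of_rat M"
    then obtain w where w: "w \<in> K" "w ^ 2 = of_rat M"
      by blast
    define \<eta> where "\<eta> = U * w * of_rat (1 / M)"
    have "\<eta> ^ 2 = U ^ 2 * w ^ 2 / of_rat M ^ 2"
      by (simp add: \<eta>_def power_mult_distrib of_rat_divide power_divide)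
    also have "\<dots> = P * of_rat M / of_rat M"
      using U(4) w(2) by (simp add: power2_eq_square)
    finally have "\<eta> ^ 2 = P"
      using \<open>M \<noteq> 0\<close> by simp
    moreover have "\<eta> \<in> K"
      using U w by (auto simp: \<eta>_def intro!: mult_mem_biquad_field of_rat_mem_biquad_field)
    moreover have "algebraic_int \<eta>" "algebraic_int (1 / \<eta>)"
      using P \<open>\<eta> ^ 2 = P\<close>
      by (auto intro: algebraic_int_power_imp_algebraic_int[of _ 2] simp: power_one_over)
    ultimately show "\<exists>\<eta>\<in>unit_group K. \<eta> ^ 2 = P"
      using \<open>P \<noteq> 0\<close> by (auto simp: unit_group_def)
  qed
qed

end

theorem proposition5p1:
  fixes d1 d2 :: int and \<epsilon>1 \<epsilon>2 \<epsilon>3 :: real and n1 n2 n3 :: int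
  assumes d_pos: "d1 > 0" "d2 > 0"
      and d_nonsq: "nonsquare d1" "nonsquare d2" "nonsquare (d1 * d2)"
      and fu: "fundamental_unit d1 \<epsilon>1" "fundamental_unit d2 \<epsilon>2" "fundamental_unit (d1 * d2) \<epsilon>3"
      and norm1: "qnorm d1 \<epsilon>1 = 1" "qnorm d2 \<epsilon>2 = 1" "qnorm (d1 * d2) \<epsilon>3 = 1"
  defines "m1 \<equiv> squarefree_part \<lfloor>qnorm d1 (\<epsilon>1 + 1)\<rfloor>"
      and "m2 \<equiv> squarefree_part \<lfloor>qnorm d2 (\<epsilon>2 + 1)\<rfloor>"
      and "m3 \<equiv> squarefree_part \<lfloor>qnorm (d1 * d2) (\<epsilon>3 + 1)\<rfloor>"
  shows "(\<exists>\<eta> \<in> unit_group (biquad_field d1 d2).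
            \<eta> ^ 2 = \<epsilon>1 powi n1 * \<epsilon>2 powi n2 * \<epsilon>3 powi n3)
     \<longleftrightarrow> (\<exists>q::rat. q \<noteq> 0 \<and>
            (let M = (of_int m1 :: rat) powi n1 * of_int m2 powi n2 * of_int m3 powi n3 in
              M = q ^ 2 \<or> M = of_int d1 * q ^ 2 \<or> M = of_int d2 * q ^ 2
              \<or> M = of_int (d1 * d2) * q ^ 2))"
proof -
  interpret real_biquadratic d1 d2
    using d_pos d_nonsq by unfold_locales
  have units: "\<epsilon>1 \<in> unit_group (qfield d1)" "\<epsilon>2 \<in> unit_group (qfield d2)"
    "\<epsilon>3 \<in> unit_group (qfield (d1 * d2))" and pos: "\<epsilon>1 > 0" "\<epsilon>2 > 0" "\<epsilon>3 > 0"
    using fu by (auto simp: fundamental_unit_def)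
  have squares: "invertible_square (\<epsilon>1 * of_int m1)" "invertible_square (\<epsilon>2 * of_int m2)"
    "invertible_square (\<epsilon>3 * of_int m3)"
    unfolding m1_def m2_def m3_def
    using invertible_square_of_norm_one_unit qfield_subset_biquad_field d_nonsq d_pos units pos norm1
    by (auto simp: zero_less_mult_iff)
  define M :: rat where "M = of_int m1 powi n1 * of_int m2 powi n2 * of_int m3 powi n3"
  define P where "P = \<epsilon>1 powi n1 * \<epsilon>2 powi n2 * \<epsilon>3 powi n3"
  have "P * of_rat M = (\<epsilon>1 * of_int m1) powi n1 * (\<epsilon>2 * of_int m2) powi n2 * (\<epsilon>3 * of_int m3) powi n3"
    by (simp add: P_def M_def of_rat_mult of_rat_power_int power_int_mult_distrib ac_simps)
  then have "invertible_square (P * of_rat M)"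
    using squares by (simp add: invertible_square_mult invertible_square_power_int)
  moreover have "M \<noteq> 0"
    using squares by (auto simp: M_def power_int_not_zero dest: invertible_square_nonzero)
  moreover have "algebraic_int P" "algebraic_int (1 / P)"
  proof -
    have "1 / P = (1 / \<epsilon>1) powi n1 * (1 / \<epsilon>2) powi n2 * (1 / \<epsilon>3) powi n3"
      by (simp add: P_def power_int_one_over)
    then show "algebraic_int P" "algebraic_int (1 / P)"
      using units unfolding P_def unit_group_def
      by (auto simp: inverse_eq_divide intro!: algebraic_int_times algebraic_int_power_int)
  qed
  ultimately show ?thesis
    unfolding Let_def P_def[symmetric] M_def[symmetric]
    by (simp add: square_of_unit_iff_rat_square rat_square_in_biquad_field_iff)
qed

end
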